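(* Let $G$ be a connected graph and $r\in\mathbb{N}$. For every covering $p:C\to G$ that preserves $(r/2)$-balls there is a covering $q:G_r\to C$ such that $p_r=p\circ q$, and all such coverings $q$ are equivalent.
   Context: Graphs may have loops and parallel edges and are viewed as 1-complexes; coverings have connected covering spaces. A cycle may be a loop or a pair of parallel edges; a closed walk once around a cycle $O$ traverses every edge of $O$ exactly once. $\pi_1^r(G,x_0)$ is the subgroup of $\pi_1(G,x_0)$ generated by the classes of closed walks $W_0QW_0^-$, $W_0$ a walk from $x_0$ to a vertex $y$, $Q$ a closed walk at $y$ once around a cycle of length at most $r$, $W_0^-$ the reverse of $W_0$. The $r$-local covering $p_r:G_r\to G$ is the connected normal covering with characteristic subgroup $\pi_1^r(G,x_0)$. For a vertex $v$ of a graph $X$, $B_X(v,r/2)$ is the subgraph formed by the vertices at distance at most $r/2$ from $v$ and the edges $xy$ with $d_X(v,x)+1+d_X(y,v)\le r$. A covering $p:C\to G$ preserves $(r/2)$-balls if for every vertex $v$ of $G$ and every lift $\hat v$, $p$ maps $B_C(\hat v,r/2)$ isomorphically onto $B_G(v,r/2)$. Two coverings $q:X\to Y$, $q':X'\to Y$ are equivalent if there is a homeomorphism $h:X\to X'$ with $q'\circ h=q$. *)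

theory Defs
  imports Main
begin

text \<open>Graphs (with loops and parallel edges, viewed as 1-complexes) are represented by
  their darts (oriented edges): a set of vertices, a set of darts, a tail map and a
  fixed-point-free involution reversing darts.\<close>

record ('v, 'd) graph =
  verts :: "'v set"
  darts :: "'d set"
  tl    :: "'d \<Rightarrow> 'v"
  rv    :: "'d \<Rightarrow> 'd"

definition wf_graph :: "('v, 'd) graph \<Rightarrow> bool" where
  "wf_graph G \<longleftrightarrow> (\<forall>d\<in>darts G. tl G d \<in> verts G \<and> rv G d \<in> darts G
      \<and> rv G (rv G d) = d \<and> rv G d \<noteq> d)"

definition head :: "('v, 'd) graph \<Rightarrow> 'd \<Rightarrow> 'v" where
  "head G d = tl G (rv G d)"

definition edge_of :: "('v, 'd) graph \<Rightarrow> 'd \<Rightarrow> 'd set" where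
  "edge_of G d = {d, rv G d}"

definition walk :: "('v, 'd) graph \<Rightarrow> 'v \<Rightarrow> 'v \<Rightarrow> 'd list \<Rightarrow> bool" where
  "walk G u v W \<longleftrightarrow> u \<in> verts G \<and> v \<in> verts G \<and> set W \<subseteq> darts G \<and>
     (if W = [] then u = v
      else tl G (hd W) = u \<and> head G (last W) = v \<and>
           (\<forall>i. Suc i < length W \<longrightarrow> head G (W ! i) = tl G (W ! Suc i)))"

definition rev_walk :: "('v, 'd) graph \<Rightarrow> 'd list \<Rightarrow> 'd list" where
  "rev_walk G W = rev (map (rv G) W)"

definition connected_graph :: "('v, 'd) graph \<Rightarrow> bool" where
  "connected_graph G \<longleftrightarrow> wf_graph G \<and> verts G \<noteq> {} \<and>
     (\<forall>u\<in>verts G. \<forall>v\<in>verts G. \<exists>W. walk G u v W)"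

definition hstep :: "('v, 'd) graph \<Rightarrow> 'v \<Rightarrow> 'v \<Rightarrow> 'd list \<Rightarrow> 'd list \<Rightarrow> bool" where
  "hstep G u v W W' \<longleftrightarrow> (\<exists>xs ys d. d \<in> darts G \<and> W = xs @ [d, rv G d] @ ys \<and> W' = xs @ ys
      \<and> walk G u v W \<and> walk G u v W')"

definition homotopic :: "('v, 'd) graph \<Rightarrow> 'v \<Rightarrow> 'v \<Rightarrow> 'd list \<Rightarrow> 'd list \<Rightarrow> bool" where
  "homotopic G u v = (\<lambda>W W'. hstep G u v W W' \<or> hstep G u v W' W)\<^sup>*\<^sup>*"

text \<open>A closed walk at y once around a cycle: nonempty, closed, no repeated vertex,
  every edge of the cycle traversed exactly once (covers loops and pairs of parallel edges).\<close>
definition cycle_walk :: "('v, 'd) graph \<Rightarrow> 'v \<Rightarrow> 'd list \<Rightarrow> bool" where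
  "cycle_walk G y Q \<longleftrightarrow> Q \<noteq> [] \<and> walk G y y Q \<and> distinct (map (tl G) Q)
     \<and> distinct (map (edge_of G) Q)"

definition pi1r_generator :: "('v, 'd) graph \<Rightarrow> nat \<Rightarrow> 'v \<Rightarrow> 'd list \<Rightarrow> bool" where
  "pi1r_generator G r x0 W \<longleftrightarrow> (\<exists>y W0 Q. walk G x0 y W0 \<and> cycle_walk G y Q \<and> length Q \<le> r
     \<and> W = W0 @ Q @ rev_walk G W0)"

text \<open>pi_1^r(G,x0), as the set of closed walks at x0 whose homotopy class lies in the
  subgroup generated by the classes of the generators (products of generators and their
  inverses).\<close>
definition pi1r :: "('v, 'd) graph \<Rightarrow> nat \<Rightarrow> 'v \<Rightarrow> 'd list set" where
  "pi1r G r x0 = {W. walk G x0 x0 W \<and> (\<exists>gs. (\<forall>g\<in>set gs. pi1r_generator G r x0 g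
        \<or> (\<exists>g'. pi1r_generator G r x0 g' \<and> g = rev_walk G g'))
      \<and> homotopic G x0 x0 W (concat gs))}"

definition covering :: "('a, 'b) graph \<Rightarrow> ('v, 'd) graph \<Rightarrow> ('a \<Rightarrow> 'v) \<Rightarrow> ('b \<Rightarrow> 'd) \<Rightarrow> bool" where
  "covering X Y fv fd \<longleftrightarrow> connected_graph X \<and> wf_graph Y \<and>
     (\<forall>v\<in>verts X. fv v \<in> verts Y) \<and>
     (\<forall>d\<in>darts X. fd d \<in> darts Y \<and> tl Y (fd d) = fv (tl X d) \<and> rv Y (fd d) = fd (rv X d)) \<and>
     fv ` verts X = verts Y \<and>
     (\<forall>v\<in>verts X. bij_betw fd {d\<in>darts X. tl X d = v} {d\<in>darts Y. tl Y d = fv v})"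

text \<open>Characteristic subgroup p_*(pi_1(X, xh)) in pi_1(Y, p xh), as closed walks at p xh.\<close>
definition char_subgroup :: "('a, 'b) graph \<Rightarrow> ('v, 'd) graph \<Rightarrow> ('a \<Rightarrow> 'v) \<Rightarrow> ('b \<Rightarrow> 'd)
    \<Rightarrow> 'a \<Rightarrow> 'd list set" where
  "char_subgroup X Y fv fd xh = {W. walk Y (fv xh) (fv xh) W \<and>
      (\<exists>Wh. walk X xh xh Wh \<and> homotopic Y (fv xh) (fv xh) W (map fd Wh))}"

definition dist :: "('v, 'd) graph \<Rightarrow> 'v \<Rightarrow> 'v \<Rightarrow> nat" where
  "dist G u v = (LEAST n. \<exists>W. walk G u v W \<and> length W = n)"

text \<open>B_X(v, r/2): vertices x with d(v,x) \<le> r/2 and (darts of) edges xy with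
  d(v,x)+1+d(y,v) \<le> r.\<close>
definition ball_verts :: "('v, 'd) graph \<Rightarrow> 'v \<Rightarrow> nat \<Rightarrow> 'v set" where
  "ball_verts X v r = {x\<in>verts X. 2 * dist X v x \<le> r}"

definition ball_darts :: "('v, 'd) graph \<Rightarrow> 'v \<Rightarrow> nat \<Rightarrow> 'd set" where
  "ball_darts X v r = {d\<in>darts X. dist X v (tl X d) + 1 + dist X (head X d) v \<le> r}"

definition preserves_balls :: "('a, 'b) graph \<Rightarrow> ('v, 'd) graph \<Rightarrow> ('a \<Rightarrow> 'v) \<Rightarrow> ('b \<Rightarrow> 'd)
    \<Rightarrow> nat \<Rightarrow> bool" where
  "preserves_balls X Y fv fd r \<longleftrightarrow> (\<forall>v\<in>verts Y. \<forall>vh\<in>verts X. fv vh = v \<longrightarrow>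
      bij_betw fv (ball_verts X vh r) (ball_verts Y v r) \<and>
      bij_betw fd (ball_darts X vh r) (ball_darts Y v r))"

definition graph_iso :: "('a, 'b) graph \<Rightarrow> ('v, 'd) graph \<Rightarrow> ('a \<Rightarrow> 'v) \<Rightarrow> ('b \<Rightarrow> 'd) \<Rightarrow> bool" where
  "graph_iso X Y hv hdt \<longleftrightarrow> bij_betw hv (verts X) (verts Y) \<and> bij_betw hdt (darts X) (darts Y) \<and>
     (\<forall>d\<in>darts X. tl Y (hdt d) = hv (tl X d) \<and> rv Y (hdt d) = hdt (rv X d))"

definition equivalent_coverings :: "('a, 'b) graph \<Rightarrow> ('a \<Rightarrow> 'v) \<Rightarrow> ('b \<Rightarrow> 'd)
    \<Rightarrow> ('c, 'e) graph \<Rightarrow> ('c \<Rightarrow> 'v) \<Rightarrow> ('e \<Rightarrow> 'd) \<Rightarrow> bool" where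
  "equivalent_coverings X qv qd X' qv' qd' \<longleftrightarrow> (\<exists>hv hdt. graph_iso X X' hv hdt \<and>
     (\<forall>v\<in>verts X. qv' (hv v) = qv v) \<and> (\<forall>d\<in>darts X. qd' (hdt d) = qd d))"

end

theory Submission
  imports Defs
begin

text \<open>Walks lift uniquely through coverings, and homotopic walks have lifts with the same end.
  Hence a covering Y \<rightarrow> G factors through a covering X \<rightarrow> G at chosen base points once every loop
  whose lift to Y is closed also has a closed lift to X; for G_r these loops are exactly pi_1^r.
  If C preserves (r/2)-balls, a cycle of length at most r lifts into a ball on which p is
  injective, so its lift closes up; hence all of pi_1^r lifts to closed walks in C, which gives q.
  As pi_1^r is normal, the deck transformations of G_r act transitively on fibres; composing q'
  with a suitable one yields a lift agreeing with q at one vertex, hence equal to q.\<close>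

lemma wf_graph_tl: "wf_graph G \<Longrightarrow> d \<in> darts G \<Longrightarrow> tl G d \<in> verts G"
  unfolding wf_graph_def by auto

lemma wf_graph_head: "wf_graph G \<Longrightarrow> d \<in> darts G \<Longrightarrow> head G d \<in> verts G"
  unfolding wf_graph_def head_def by auto

lemma wf_graph_rv: "wf_graph G \<Longrightarrow> d \<in> darts G \<Longrightarrow> rv G d \<in> darts G \<and> rv G (rv G d) = d"
  unfolding wf_graph_def by auto

lemma walk_Nil [simp]: "walk G u v [] \<longleftrightarrow> u \<in> verts G \<and> u = v"
  by (auto simp: walk_def)

lemma walk_Cons:
  assumes "wf_graph G"
  shows "walk G u v (d # W) \<longleftrightarrow> d \<in> darts G \<and> tl G d = u \<and> walk G (head G d) v W"
proof (cases W)
  case Nil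
  then show ?thesis using assms by (auto simp: walk_def wf_graph_def head_def)
next
  case (Cons e W')
  have "(\<forall>i. Suc i < length (d # W) \<longrightarrow> head G ((d # W) ! i) = tl G ((d # W) ! Suc i)) \<longleftrightarrow>
        head G d = tl G e \<and> (\<forall>i. Suc i < length W \<longrightarrow> head G (W ! i) = tl G (W ! Suc i))"
    using Cons by (auto simp: less_Suc_eq_0_disj)
  then show ?thesis using assms Cons by (auto simp: walk_def wf_graph_def head_def)
qed

lemma walk_endpoints: "walk G u v W \<Longrightarrow> u \<in> verts G \<and> v \<in> verts G"
  by (auto simp: walk_def)

lemma walk_darts: "walk G u v W \<Longrightarrow> set W \<subseteq> darts G"
  by (auto simp: walk_def)

lemma walk_append:
  "wf_graph G \<Longrightarrow> walk G u w (W1 @ W2) \<longleftrightarrow> (\<exists>v. walk G u v W1 \<and> walk G v w W2)"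
  by (induction W1 arbitrary: u) (auto simp: walk_Cons walk_endpoints wf_graph_tl)

lemma walk_appendI: "wf_graph G \<Longrightarrow> walk G u v W1 \<Longrightarrow> walk G v w W2 \<Longrightarrow> walk G u w (W1 @ W2)"
  using walk_append by metis

lemma walk_snocI:
  "wf_graph G \<Longrightarrow> walk G u (tl G d) W \<Longrightarrow> d \<in> darts G \<Longrightarrow> walk G u (head G d) (W @ [d])"
  by (simp add: walk_appendI walk_Cons wf_graph_head)

lemma length_rev_walk [simp]: "length (rev_walk G W) = length W"
  by (simp add: rev_walk_def)

lemma rev_walk_rev_walk: "wf_graph G \<Longrightarrow> set W \<subseteq> darts G \<Longrightarrow> rev_walk G (rev_walk G W) = W"
  unfolding rev_walk_def by (induction W) (auto simp: wf_graph_rv rev_map)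

lemma walk_rev_walk: "wf_graph G \<Longrightarrow> walk G u v W \<Longrightarrow> walk G v u (rev_walk G W)"
proof (induction W arbitrary: u)
  case Nil
  then show ?case by (auto simp: rev_walk_def)
next
  case (Cons d W)
  then have d: "d \<in> darts G" "tl G d = u" "walk G (head G d) v W"
    by (auto simp: walk_Cons)
  have "walk G (head G d) u [rv G d]"
    using d Cons.prems by (auto simp: walk_Cons wf_graph_rv head_def wf_graph_tl)
  then show ?case
    using Cons.IH[OF Cons.prems(1) d(3)] Cons.prems(1) by (simp add: rev_walk_def walk_appendI)
qed

lemma walk_conjugateI:
  "wf_graph G \<Longrightarrow> walk G u v P \<Longrightarrow> walk G v v Q \<Longrightarrow> walk G u u (P @ Q @ rev_walk G P)"
  by (intro walk_appendI walk_rev_walk)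

section \<open>Lifting walks through a covering\<close>

lemma covering_wf_source: "covering X Y fv fd \<Longrightarrow> wf_graph X"
  by (simp add: covering_def connected_graph_def)

lemma covering_wf_target: "covering X Y fv fd \<Longrightarrow> wf_graph Y"
  by (simp add: covering_def)

lemma covering_connected: "covering X Y fv fd \<Longrightarrow> connected_graph X"
  by (simp add: covering_def)

lemma connected_graph_walk: "connected_graph X \<Longrightarrow> u \<in> verts X \<Longrightarrow> v \<in> verts X \<Longrightarrow> \<exists>W. walk X u v W"
  by (simp add: connected_graph_def)

lemma covering_vert: "covering X Y fv fd \<Longrightarrow> x \<in> verts X \<Longrightarrow> fv x \<in> verts Y"
  by (simp add: covering_def)

lemma covering_dart:
  "covering X Y fv fd \<Longrightarrow> e \<in> darts X \<Longrightarrow>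
    fd e \<in> darts Y \<and> tl Y (fd e) = fv (tl X e) \<and> rv Y (fd e) = fd (rv X e)"
  by (simp add: covering_def)

lemma covering_head:
  assumes c: "covering X Y fv fd" and e: "e \<in> darts X"
  shows "fv (head X e) = head Y (fd e)"
proof -
  have "rv X e \<in> darts X" using wf_graph_rv[OF covering_wf_source[OF c] e] by auto
  then show ?thesis using covering_dart[OF c] e by (simp add: head_def)
qed

lemma covering_star:
  "covering X Y fv fd \<Longrightarrow> v \<in> verts X \<Longrightarrow>
    bij_betw fd {d\<in>darts X. tl X d = v} {d\<in>darts Y. tl Y d = fv v}"
  by (simp add: covering_def)

definition lift_dart :: "('a, 'b) graph \<Rightarrow> ('b \<Rightarrow> 'd) \<Rightarrow> 'a \<Rightarrow> 'd \<Rightarrow> 'b" where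
  "lift_dart X fd x d = (THE e. e \<in> darts X \<and> tl X e = x \<and> fd e = d)"

text \<open>Only meaningful when the walk starts at the image of x; otherwise lift_dart is junk.\<close>
fun lift_end :: "('a, 'b) graph \<Rightarrow> ('b \<Rightarrow> 'd) \<Rightarrow> 'a \<Rightarrow> 'd list \<Rightarrow> 'a" where
  "lift_end X fd x [] = x"
| "lift_end X fd x (d # W) = lift_end X fd (head X (lift_dart X fd x d)) W"

lemma lift_end_append: "lift_end X fd x (W1 @ W2) = lift_end X fd (lift_end X fd x W1) W2"
  by (induction W1 arbitrary: x) auto

lemma lift_dart_unique:
  assumes c: "covering X Y fv fd" and e: "e \<in> darts X" "tl X e = x" "fd e = d"
  shows "lift_dart X fd x d = e"
proof -
  have "x \<in> verts X" using e wf_graph_tl[OF covering_wf_source[OF c]] by auto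
  then have inj: "inj_on fd {d\<in>darts X. tl X d = x}"
    using covering_star[OF c] bij_betw_imp_inj_on by blast
  show ?thesis
    unfolding lift_dart_def by (rule the_equality) (use e inj in \<open>auto simp: inj_on_def\<close>)
qed

lemma lift_dart_lifts:
  assumes c: "covering X Y fv fd" and x: "x \<in> verts X" and d: "d \<in> darts Y" "tl Y d = fv x"
  shows "lift_dart X fd x d \<in> darts X \<and> tl X (lift_dart X fd x d) = x \<and> fd (lift_dart X fd x d) = d"
proof -
  have "d \<in> fd ` {d\<in>darts X. tl X d = x}"
    using covering_star[OF c x] d by (simp add: bij_betw_def)
  then obtain e where "e \<in> darts X" "tl X e = x" "fd e = d" by auto
  then show ?thesis using lift_dart_unique[OF c] by auto
qed

lemma covering_map_walk:
  assumes c: "covering X Y fv fd"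
  shows "walk X a b W \<Longrightarrow> walk Y (fv a) (fv b) (map fd W)"
proof (induction W arbitrary: a)
  case Nil
  then show ?case by (auto simp: covering_vert[OF c])
next
  case (Cons e W)
  then have e: "e \<in> darts X" "tl X e = a" "walk X (head X e) b W"
    by (auto simp: walk_Cons covering_wf_source[OF c])
  then show ?case using Cons.IH[OF e(3)] covering_head[OF c e(1)] covering_dart[OF c e(1)]
    by (simp add: walk_Cons covering_wf_target[OF c])
qed

lemma lift_end_walk:
  assumes c: "covering X Y fv fd"
  shows "x \<in> verts X \<Longrightarrow> walk Y (fv x) v W \<Longrightarrow>
    (\<exists>W'. walk X x (lift_end X fd x W) W' \<and> map fd W' = W)
    \<and> fv (lift_end X fd x W) = v \<and> lift_end X fd x W \<in> verts X"
proof (induction W arbitrary: x)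
  case Nil
  then show ?case by auto
next
  case (Cons d W)
  note wfX = covering_wf_source[OF c]
  from Cons.prems have d: "d \<in> darts Y" "tl Y d = fv x" "walk Y (head Y d) v W"
    by (auto simp: walk_Cons covering_wf_target[OF c])
  define e where "e = lift_dart X fd x d"
  have e: "e \<in> darts X" "tl X e = x" "fd e = d"
    using lift_dart_lifts[OF c Cons.prems(1) d(1,2)] e_def by auto
  have "head X e \<in> verts X" "fv (head X e) = head Y d"
    using e wf_graph_head[OF wfX] covering_head[OF c] by auto
  with Cons.IH[of "head X e"] d(3) obtain W' where
    "walk X (head X e) (lift_end X fd (head X e) W) W'" "map fd W' = W"
    "fv (lift_end X fd (head X e) W) = v" "lift_end X fd (head X e) W \<in> verts X" by auto
  then show ?case
    using e by (auto simp: e_def[symmetric] walk_Cons wfX intro!: exI[of _ "e # W'"])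
qed

lemma lift_end_map:
  assumes c: "covering X Y fv fd"
  shows "walk X x x' W \<Longrightarrow> lift_end X fd x (map fd W) = x'"
proof (induction W arbitrary: x)
  case Nil
  then show ?case by simp
next
  case (Cons e W)
  then show ?case
    using lift_dart_unique[OF c] covering_wf_source[OF c] by (auto simp: walk_Cons)
qed

lemma covering_map_rev_walk:
  "covering X Y fv fd \<Longrightarrow> set W \<subseteq> darts X \<Longrightarrow> map fd (rev_walk X W) = rev_walk Y (map fd W)"
  unfolding rev_walk_def by (induction W) (auto simp: covering_dart)

lemma lift_end_rev_walk:
  assumes c: "covering X Y fv fd" and x: "x \<in> verts X" and W: "walk Y (fv x) v W"
  shows "lift_end X fd (lift_end X fd x W) (rev_walk Y W) = x"
proof -
  obtain W' where W': "walk X x (lift_end X fd x W) W'" "map fd W' = W"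
    using lift_end_walk[OF c x W] by auto
  have "walk X (lift_end X fd x W) x (rev_walk X W')"
    using walk_rev_walk[OF covering_wf_source[OF c] W'(1)] .
  moreover have "map fd (rev_walk X W') = rev_walk Y W"
    using covering_map_rev_walk[OF c walk_darts[OF W'(1)]] W'(2) by simp
  ultimately show ?thesis using lift_end_map[OF c] by metis
qed

lemma lift_end_inj:
  assumes c: "covering X Y fv fd" and a: "a \<in> verts X" "fv a = u" and b: "b \<in> verts X" "fv b = u"
    and R: "walk Y u v R" and eq: "lift_end X fd a R = lift_end X fd b R"
  shows "a = b"
  using lift_end_rev_walk[OF c a(1)] lift_end_rev_walk[OF c b(1)] a b R eq by metis

lemma lift_end_backtrack:
  assumes c: "covering X Y fv fd" and z: "z \<in> verts X" and d: "d \<in> darts Y" "tl Y d = fv z"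
  shows "lift_end X fd z [d, rv Y d] = z"
proof -
  define e where "e = lift_dart X fd z d"
  have e: "e \<in> darts X" "tl X e = z" "fd e = d" using lift_dart_lifts[OF c z d] e_def by auto
  have rv_e: "rv X e \<in> darts X" "rv X (rv X e) = e"
    using wf_graph_rv[OF covering_wf_source[OF c] e(1)] by auto
  have "lift_dart X fd (head X e) (rv Y d) = rv X e"
    by (rule lift_dart_unique[OF c rv_e(1)]) (use e covering_dart[OF c e(1)] in \<open>auto simp: head_def\<close>)
  then show ?thesis using e rv_e by (simp add: e_def[symmetric] head_def)
qed

lemma lift_end_homotopic:
  assumes c: "covering X Y fv fd" and h: "homotopic Y u v W W'" and x: "x \<in> verts X" "fv x = u"
  shows "lift_end X fd x W = lift_end X fd x W'"
proof -
  have step: "lift_end X fd x A = lift_end X fd x B" if "hstep Y u v A B" for A B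
  proof -
    from that obtain xs ys d where H: "d \<in> darts Y" "A = xs @ [d, rv Y d] @ ys" "B = xs @ ys"
        "walk Y u v A"
      unfolding hstep_def by blast
    then obtain m where m: "walk Y u m xs" "walk Y m v ([d, rv Y d] @ ys)"
      using walk_append[OF covering_wf_target[OF c]] by blast
    then have "tl Y d = m" using walk_Cons[OF covering_wf_target[OF c]] by auto
    moreover have "lift_end X fd x xs \<in> verts X" "fv (lift_end X fd x xs) = m"
      using lift_end_walk[OF c x(1)] m(1) x(2) by auto
    ultimately show ?thesis using H lift_end_backtrack[OF c _ H(1)] by (simp add: lift_end_append)
  qed
  show ?thesis using h unfolding homotopic_def
    by (induction rule: rtranclp_induct) (auto dest: step)
qed

section \<open>The lifting criterion\<close>

locale covering_lifting =
  fixes X :: "('x, 'xd) graph" and G :: "('v, 'd) graph" and pv :: "'x \<Rightarrow> 'v" and pd :: "'xd \<Rightarrow> 'd"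
    and Y :: "('y, 'yd) graph" and qv :: "'y \<Rightarrow> 'v" and qd :: "'yd \<Rightarrow> 'd"
    and xh :: 'x and yh :: 'y
  assumes cov_X: "covering X G pv pd" and cov_Y: "covering Y G qv qd"
    and xh: "xh \<in> verts X" and yh: "yh \<in> verts Y" and base: "pv xh = qv yh"
    and loops_close:
      "\<And>U. walk G (qv yh) (qv yh) U \<Longrightarrow> lift_end Y qd yh U = yh \<Longrightarrow> lift_end X pd xh U = xh"
begin

lemmas wf_X = covering_wf_source[OF cov_X] and wf_Y = covering_wf_source[OF cov_Y]
  and wf_G = covering_wf_target[OF cov_X]

definition lifted_vert :: "'y \<Rightarrow> 'x" where
  "lifted_vert v = lift_end X pd xh (map qd (SOME W. walk Y yh v W))"

definition lifted_dart :: "'yd \<Rightarrow> 'xd" where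
  "lifted_dart d = lift_dart X pd (lifted_vert (tl Y d)) (qd d)"

lemma lifted_vert_walk:
  assumes W: "walk Y yh v W"
  shows "lifted_vert v = lift_end X pd xh (map qd W)"
proof -
  define W0 where "W0 = (SOME W. walk Y yh v W)"
  have W0: "walk Y yh v W0" unfolding W0_def using W by (rule someI)
  define A B where "A = map qd W" and "B = map qd W0"
  have A: "walk G (qv yh) (qv v) A" and B: "walk G (qv yh) (qv v) B"
    unfolding A_def B_def using covering_map_walk[OF cov_Y] W W0 by auto
  have "lift_end Y qd yh (A @ rev_walk G B) = yh"
    using lift_end_map[OF cov_Y] W W0 lift_end_rev_walk[OF cov_Y yh B]
    by (simp add: A_def B_def lift_end_append)
  then have "lift_end X pd xh (A @ rev_walk G B) = xh"
    using loops_close walk_appendI[OF wf_G A walk_rev_walk[OF wf_G B]] by blast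
  moreover have "lift_end X pd (lift_end X pd xh B) (rev_walk G B) = xh"
    using lift_end_rev_walk[OF cov_X xh] B base by simp
  moreover have "lift_end X pd xh A \<in> verts X" "pv (lift_end X pd xh A) = qv v"
    and "lift_end X pd xh B \<in> verts X" "pv (lift_end X pd xh B) = qv v"
    using lift_end_walk[OF cov_X xh] A B base by auto
  ultimately have "lift_end X pd xh A = lift_end X pd xh B"
    using lift_end_inj[OF cov_X _ _ _ _ walk_rev_walk[OF wf_G B]] by (simp add: lift_end_append)
  then show ?thesis unfolding lifted_vert_def W0_def[symmetric] A_def B_def by simp
qed

lemma lifted_vert_base: "lifted_vert yh = xh"
  using lifted_vert_walk[of yh "[]"] yh by simp

lemma lifted_vert_over:
  assumes "v \<in> verts Y"
  shows "lifted_vert v \<in> verts X \<and> pv (lifted_vert v) = qv v"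
proof -
  obtain W where "walk Y yh v W"
    using connected_graph_walk[OF covering_connected[OF cov_Y] yh assms] by auto
  then show ?thesis
    using lifted_vert_walk lift_end_walk[OF cov_X xh] covering_map_walk[OF cov_Y] base by metis
qed

lemma lifted_dart_over:
  assumes "d \<in> darts Y"
  shows "lifted_dart d \<in> darts X \<and> tl X (lifted_dart d) = lifted_vert (tl Y d) \<and> pd (lifted_dart d) = qd d"
  unfolding lifted_dart_def
  using lift_dart_lifts[OF cov_X] lifted_vert_over wf_graph_tl[OF wf_Y assms] covering_dart[OF cov_Y assms]
  by auto

lemma lifted_vert_head:
  assumes d: "d \<in> darts Y"
  shows "lifted_vert (head Y d) = head X (lifted_dart d)"
proof -
  obtain W where W: "walk Y yh (tl Y d) W"
    using connected_graph_walk[OF covering_connected[OF cov_Y] yh wf_graph_tl[OF wf_Y d]] by auto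
  then have "walk Y yh (head Y d) (W @ [d])" using walk_snocI[OF wf_Y] d by blast
  then show ?thesis
    using lifted_vert_walk W by (simp add: lift_end_append lifted_dart_def)
qed

lemma lifted_dart_rv:
  assumes d: "d \<in> darts Y"
  shows "rv X (lifted_dart d) = lifted_dart (rv Y d)"
proof -
  have e: "lifted_dart d \<in> darts X" using lifted_dart_over[OF d] by auto
  have "lift_dart X pd (lifted_vert (tl Y (rv Y d))) (qd (rv Y d)) = rv X (lifted_dart d)"
  proof (rule lift_dart_unique[OF cov_X])
    show "rv X (lifted_dart d) \<in> darts X" using wf_graph_rv[OF wf_X e] by auto
    show "tl X (rv X (lifted_dart d)) = lifted_vert (tl Y (rv Y d))"
      using lifted_vert_head[OF d] by (simp add: head_def)
    show "pd (rv X (lifted_dart d)) = qd (rv Y d)"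
      using covering_dart[OF cov_X e] covering_dart[OF cov_Y d] lifted_dart_over[OF d] by simp
  qed
  then show ?thesis by (simp add: lifted_dart_def)
qed

lemma lifted_vert_surj: "lifted_vert ` verts Y = verts X"
proof
  show "lifted_vert ` verts Y \<subseteq> verts X" using lifted_vert_over by auto
  show "verts X \<subseteq> lifted_vert ` verts Y"
  proof
    fix x assume x: "x \<in> verts X"
    obtain V where V: "walk X xh x V"
      using connected_graph_walk[OF covering_connected[OF cov_X] xh x] by auto
    then have U: "walk G (qv yh) (pv x) (map pd V)" using covering_map_walk[OF cov_X] base by metis
    then obtain W where W: "walk Y yh (lift_end Y qd yh (map pd V)) W" "map qd W = map pd V"
      using lift_end_walk[OF cov_Y yh] by blast
    then have "lifted_vert (lift_end Y qd yh (map pd V)) = x"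
      using lifted_vert_walk lift_end_map[OF cov_X V] by simp
    moreover have "lift_end Y qd yh (map pd V) \<in> verts Y" using lift_end_walk[OF cov_Y yh U] by auto
    ultimately show "x \<in> lifted_vert ` verts Y" by force
  qed
qed

lemma lifted_dart_star:
  assumes v: "v \<in> verts Y"
  shows "bij_betw lifted_dart {d\<in>darts Y. tl Y d = v} {d\<in>darts X. tl X d = lifted_vert v}"
proof -
  have "bij_betw (pd \<circ> lifted_dart) {d\<in>darts Y. tl Y d = v} {d\<in>darts G. tl G d = qv v}"
    using covering_star[OF cov_Y v] by (rule bij_betw_cong[THEN iffD1, rotated]) (simp add: lifted_dart_over)
  moreover have "bij_betw pd {d\<in>darts X. tl X d = lifted_vert v} {d\<in>darts G. tl G d = qv v}"
    using covering_star[OF cov_X] lifted_vert_over[OF v] by metis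
  moreover have "lifted_dart ` {d\<in>darts Y. tl Y d = v} \<subseteq> {d\<in>darts X. tl X d = lifted_vert v}"
    using lifted_dart_over by auto
  ultimately show ?thesis using bij_betw_comp_iff2 by blast
qed

lemma covering_lifted: "covering Y X lifted_vert lifted_dart"
  unfolding covering_def
  using covering_connected[OF cov_Y] wf_X lifted_vert_over lifted_dart_over lifted_dart_rv
    lifted_vert_surj lifted_dart_star by auto

end

lemma covering_lift:
  assumes "covering X G pv pd" and "covering Y G qv qd"
    and "xh \<in> verts X" and "yh \<in> verts Y" and "pv xh = qv yh"
    and "\<And>U. walk G (qv yh) (qv yh) U \<Longrightarrow> lift_end Y qd yh U = yh \<Longrightarrow> lift_end X pd xh U = xh"
  shows "\<exists>hv hdt. covering Y X hv hdt \<and> hv yh = xh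
    \<and> (\<forall>v\<in>verts Y. pv (hv v) = qv v) \<and> (\<forall>d\<in>darts Y. pd (hdt d) = qd d)"
proof -
  interpret covering_lifting X G pv pd Y qv qd xh yh
    using assms by unfold_locales
  show ?thesis
    using covering_lifted lifted_vert_base lifted_vert_over lifted_dart_over by blast
qed

section \<open>Uniqueness of lifts and deck transformations\<close>

definition graph_hom :: "('a, 'b) graph \<Rightarrow> ('c, 'e) graph \<Rightarrow> ('a \<Rightarrow> 'c) \<Rightarrow> ('b \<Rightarrow> 'e) \<Rightarrow> bool" where
  "graph_hom Y X hv hdt \<longleftrightarrow> (\<forall>v\<in>verts Y. hv v \<in> verts X) \<and>
     (\<forall>d\<in>darts Y. hdt d \<in> darts X \<and> tl X (hdt d) = hv (tl Y d) \<and> rv X (hdt d) = hdt (rv Y d))"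

lemma covering_graph_hom: "covering Y X hv hdt \<Longrightarrow> graph_hom Y X hv hdt"
  by (simp add: covering_def graph_hom_def)

lemma graph_hom_id: "graph_hom Y Y id id"
  by (simp add: graph_hom_def)

lemma graph_hom_comp: "graph_hom Y X hv hdt \<Longrightarrow> graph_hom X Z gv gd \<Longrightarrow> graph_hom Y Z (gv \<circ> hv) (gd \<circ> hdt)"
  by (simp add: graph_hom_def)

lemma graph_hom_walk:
  assumes h: "graph_hom Y X hv hdt" and wY: "wf_graph Y" and wX: "wf_graph X"
  shows "walk Y a b W \<Longrightarrow> walk X (hv a) (hv b) (map hdt W)"
proof (induction W arbitrary: a)
  case Nil
  then show ?case using h by (auto simp: graph_hom_def)
next
  case (Cons d W)
  then have d: "d \<in> darts Y" "tl Y d = a" "walk Y (head Y d) b W" by (auto simp: walk_Cons wY)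
  have "head X (hdt d) = hv (head Y d)"
    using h d(1) wf_graph_rv[OF wY d(1)] by (auto simp: graph_hom_def head_def)
  then show ?case using Cons.IH[OF d(3)] d h by (auto simp: walk_Cons wX graph_hom_def)
qed

lemma graph_hom_lift_unique:
  assumes c: "covering X G pv pd" and Y: "connected_graph Y" and yh: "yh \<in> verts Y"
    and h: "graph_hom Y X hv hdt" and h': "graph_hom Y X hv' hdt'"
    and same_darts: "\<forall>d\<in>darts Y. pd (hdt d) = pd (hdt' d)" and same_base: "hv yh = hv' yh"
  shows "(\<forall>v\<in>verts Y. hv v = hv' v) \<and> (\<forall>d\<in>darts Y. hdt d = hdt' d)"
proof -
  have wY: "wf_graph Y" using Y by (simp add: connected_graph_def)
  note wX = covering_wf_source[OF c]
  have verts_eq: "hv v = hv' v" if v: "v \<in> verts Y" for v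
  proof -
    obtain W where W: "walk Y yh v W" using connected_graph_walk[OF Y yh v] by auto
    have "map pd (map hdt W) = map pd (map hdt' W)" using same_darts walk_darts[OF W] by auto
    then show ?thesis
      using lift_end_map[OF c graph_hom_walk[OF h wY wX W]] lift_end_map[OF c graph_hom_walk[OF h' wY wX W]]
        same_base by metis
  qed
  have "hdt d = hdt' d" if d: "d \<in> darts Y" for d
  proof -
    have "lift_dart X pd (hv (tl Y d)) (pd (hdt d)) = hdt d"
      using lift_dart_unique[OF c] h d by (auto simp: graph_hom_def)
    moreover have "lift_dart X pd (hv (tl Y d)) (pd (hdt d)) = hdt' d"
      using lift_dart_unique[OF c] h' d verts_eq[OF wf_graph_tl[OF wY d]] same_darts
      by (auto simp: graph_hom_def)
    ultimately show ?thesis by simp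
  qed
  then show ?thesis using verts_eq by auto
qed

lemma graph_hom_inverse_iso:
  assumes h: "graph_hom X Y hv hdt" and g: "graph_hom Y X gv gd"
    and "\<forall>v\<in>verts X. gv (hv v) = v" "\<forall>d\<in>darts X. gd (hdt d) = d"
    and "\<forall>v\<in>verts Y. hv (gv v) = v" "\<forall>d\<in>darts Y. hdt (gd d) = d"
  shows "graph_iso X Y hv hdt"
  unfolding graph_iso_def
proof (intro conjI)
  show "bij_betw hv (verts X) (verts Y)" and "bij_betw hdt (darts X) (darts Y)"
    by (rule bij_betw_byWitness; use assms in \<open>auto simp: graph_hom_def\<close>)+
  show "\<forall>d\<in>darts X. tl Y (hdt d) = hv (tl X d) \<and> rv Y (hdt d) = hdt (rv X d)"
    using h by (simp add: graph_hom_def)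
qed

text \<open>Normality of the characteristic subgroup, phrased through lifts: whether a loop at the base
  point lifts to a closed walk does not depend on the starting point in the fibre.\<close>
definition normal_covering :: "('a, 'b) graph \<Rightarrow> ('v, 'd) graph \<Rightarrow> ('a \<Rightarrow> 'v) \<Rightarrow> ('b \<Rightarrow> 'd)
    \<Rightarrow> 'a \<Rightarrow> bool" where
  "normal_covering X G fv fd xh \<longleftrightarrow> covering X G fv fd \<and> xh \<in> verts X \<and>
     (\<forall>z\<in>verts X. fv z = fv xh \<longrightarrow> (\<forall>U. walk G (fv xh) (fv xh) U \<longrightarrow>
        (lift_end X fd z U = z \<longleftrightarrow> lift_end X fd xh U = xh)))"

lemma normal_covering_deck_transformation:
  assumes n: "normal_covering X G fv fd xh" and z: "z \<in> verts X" "fv z = fv xh"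
  shows "\<exists>hv hdt. graph_iso X X hv hdt \<and> graph_hom X X hv hdt \<and> hv xh = z
    \<and> (\<forall>d\<in>darts X. fd (hdt d) = fd d)"
proof -
  have c: "covering X G fv fd" and xh: "xh \<in> verts X" using n by (auto simp: normal_covering_def)
  have closes_iff: "lift_end X fd w U = w \<longleftrightarrow> lift_end X fd xh U = xh"
    if "w \<in> verts X" "fv w = fv xh" "walk G (fv xh) (fv xh) U" for w U
    using n that unfolding normal_covering_def by blast
  have lift_from: "\<exists>hv hdt. covering X X hv hdt \<and> hv a = b \<and> (\<forall>d\<in>darts X. fd (hdt d) = fd d)"
    if ab: "a \<in> verts X" "b \<in> verts X" "fv a = fv xh" "fv b = fv xh" for a b
  proof -
    have "lift_end X fd b U = b" if "walk G (fv a) (fv a) U" "lift_end X fd a U = a" for U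
      using closes_iff[OF ab(1,3)] closes_iff[OF ab(2,4)] ab(3) that by simp
    then show ?thesis using covering_lift[OF c c ab(2,1)] ab(3,4) by auto
  qed
  obtain hv hdt gv gd where h: "covering X X hv hdt" "hv xh = z" "\<forall>d\<in>darts X. fd (hdt d) = fd d"
    and g: "covering X X gv gd" "gv z = xh" "\<forall>d\<in>darts X. fd (gd d) = fd d"
    using lift_from[OF xh z(1) refl z(2)] lift_from[OF z(1) xh z(2) refl] by blast
  have hh: "graph_hom X X hv hdt" and gg: "graph_hom X X gv gd"
    using h(1) g(1) covering_graph_hom by auto
  have "(\<forall>v\<in>verts X. (gv \<circ> hv) v = id v) \<and> (\<forall>d\<in>darts X. (gd \<circ> hdt) d = id d)"
    by (rule graph_hom_lift_unique[OF c covering_connected[OF c] xh graph_hom_comp[OF hh gg] graph_hom_id])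
      (use g h hh in \<open>auto simp: graph_hom_def\<close>)
  moreover have "(\<forall>v\<in>verts X. (hv \<circ> gv) v = id v) \<and> (\<forall>d\<in>darts X. (hdt \<circ> gd) d = id d)"
    by (rule graph_hom_lift_unique[OF c covering_connected[OF c] z(1) graph_hom_comp[OF gg hh] graph_hom_id])
      (use g h gg in \<open>auto simp: graph_hom_def\<close>)
  ultimately have "graph_iso X X hv hdt" using graph_hom_inverse_iso[OF hh gg] by simp
  then show ?thesis using hh h by blast
qed

lemma normal_covering_lifts_equivalent:
  assumes n: "normal_covering X G fv fd xh" and c: "covering C G pv pd"
    and q: "covering X C qv qd" "\<forall>v\<in>verts X. pv (qv v) = fv v" "\<forall>d\<in>darts X. pd (qd d) = fd d"
    and q': "covering X C qv' qd'" "\<forall>v\<in>verts X. pv (qv' v) = fv v" "\<forall>d\<in>darts X. pd (qd' d) = fd d"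
  shows "equivalent_coverings X qv qd X qv' qd'"
proof -
  have cX: "covering X G fv fd" and xh: "xh \<in> verts X" using n by (auto simp: normal_covering_def)
  have "qv xh \<in> qv' ` verts X" using q(1) q'(1) xh by (simp add: covering_def)
  then obtain z where z: "z \<in> verts X" "qv' z = qv xh" by auto
  then have "fv z = fv xh" using q(2) q'(2) xh by metis
  then obtain hv hdt where h: "graph_iso X X hv hdt" "graph_hom X X hv hdt" "hv xh = z"
      "\<forall>d\<in>darts X. fd (hdt d) = fd d"
    using normal_covering_deck_transformation[OF n z(1)] by blast
  have "(\<forall>v\<in>verts X. (qv' \<circ> hv) v = qv v) \<and> (\<forall>d\<in>darts X. (qd' \<circ> hdt) d = qd d)"
  proof (rule graph_hom_lift_unique[OF c covering_connected[OF cX] xh])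
    show "graph_hom X C (qv' \<circ> hv) (qd' \<circ> hdt)"
      using graph_hom_comp[OF h(2) covering_graph_hom[OF q'(1)]] .
    show "\<forall>d\<in>darts X. pd ((qd' \<circ> hdt) d) = pd (qd d)" using q(3) q'(3) h(2,4) by (auto simp: graph_hom_def)
  qed (use covering_graph_hom[OF q(1)] h(3) z(2) in auto)
  then show ?thesis unfolding equivalent_coverings_def using h(1) by auto
qed

section \<open>Coverings in which short cycles lift to closed walks\<close>

definition lifts_short_cycles_closed :: "('a, 'b) graph \<Rightarrow> ('v, 'd) graph \<Rightarrow> ('a \<Rightarrow> 'v) \<Rightarrow> ('b \<Rightarrow> 'd)
    \<Rightarrow> nat \<Rightarrow> bool" where
  "lifts_short_cycles_closed X G fv fd r \<longleftrightarrow> (\<forall>y Q z. cycle_walk G y Q \<longrightarrow> length Q \<le> r \<longrightarrow>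
     z \<in> verts X \<longrightarrow> fv z = y \<longrightarrow> lift_end X fd z Q = z)"

lemma pi1r_generator_walk: "wf_graph G \<Longrightarrow> pi1r_generator G r x0 g \<Longrightarrow> walk G x0 x0 g"
  unfolding pi1r_generator_def cycle_walk_def by (auto intro: walk_conjugateI)

lemma pi1r_generator_in_pi1r: "wf_graph G \<Longrightarrow> pi1r_generator G r x0 g \<Longrightarrow> g \<in> pi1r G r x0"
  unfolding pi1r_def homotopic_def by (auto intro!: exI[of _ "[g]"] pi1r_generator_walk)

lemma pi1r_generator_lift_closed:
  assumes c: "covering X G fv fd" and short: "lifts_short_cycles_closed X G fv fd r"
    and g: "pi1r_generator G r x0 g" and z: "z \<in> verts X" "fv z = x0"
  shows "lift_end X fd z g = z"
proof -
  obtain y P Q where P: "walk G x0 y P" and Q: "cycle_walk G y Q" "length Q \<le> r"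
    and g_eq: "g = P @ Q @ rev_walk G P"
    using g unfolding pi1r_generator_def by blast
  have "lift_end X fd z P \<in> verts X" "fv (lift_end X fd z P) = y"
    using lift_end_walk[OF c z(1)] P z(2) by auto
  then have "lift_end X fd (lift_end X fd z P) Q = lift_end X fd z P"
    using short Q unfolding lifts_short_cycles_closed_def by blast
  then show ?thesis using lift_end_rev_walk[OF c z(1)] P z(2) by (simp add: g_eq lift_end_append)
qed

lemma lift_end_rev_walk_closed:
  assumes c: "covering X G fv fd" and W: "walk G x0 x0 W"
    and closed: "\<forall>z\<in>verts X. fv z = x0 \<longrightarrow> lift_end X fd z W = z"
    and z: "z \<in> verts X" "fv z = x0"
  shows "lift_end X fd z (rev_walk G W) = z"
proof -
  note wf_G = covering_wf_target[OF c]
  define a where "a = lift_end X fd z (rev_walk G W)"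
  have "a \<in> verts X" "fv a = x0"
    using lift_end_walk[OF c z(1)] walk_rev_walk[OF wf_G W] z(2) a_def by auto
  moreover have "lift_end X fd a (rev_walk G (rev_walk G W)) = z"
    using lift_end_rev_walk[OF c z(1), of x0 "rev_walk G W"] walk_rev_walk[OF wf_G W] z(2) a_def
    by simp
  then have "lift_end X fd a W = z" using rev_walk_rev_walk[OF wf_G walk_darts[OF W]] by simp
  ultimately show ?thesis using closed a_def by simp
qed

lemma pi1r_lift_closed:
  assumes c: "covering X G fv fd" and short: "lifts_short_cycles_closed X G fv fd r"
    and U: "U \<in> pi1r G r x0" and z: "z \<in> verts X" "fv z = x0"
  shows "lift_end X fd z U = z"
proof -
  note wf_G = covering_wf_target[OF c]
  obtain gs where gs: "\<forall>g\<in>set gs. pi1r_generator G r x0 g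
      \<or> (\<exists>g'. pi1r_generator G r x0 g' \<and> g = rev_walk G g')"
    and hom: "homotopic G x0 x0 U (concat gs)"
    using U unfolding pi1r_def by blast
  have closed: "lift_end X fd z g = z" if "g \<in> set gs" for g
  proof -
    from gs that have "pi1r_generator G r x0 g \<or> (\<exists>g'. pi1r_generator G r x0 g' \<and> g = rev_walk G g')"
      by (rule bspec)
    then consider "pi1r_generator G r x0 g" | g' where "pi1r_generator G r x0 g'" "g = rev_walk G g'"
      by blast
    then show ?thesis
    proof cases
      case 1
      from pi1r_generator_lift_closed[OF c short this z] show ?thesis .
    next
      case 2
      have "\<forall>z\<in>verts X. fv z = x0 \<longrightarrow> lift_end X fd z g' = z"
        using pi1r_generator_lift_closed[OF c short 2(1)] by blast
      from lift_end_rev_walk_closed[OF c pi1r_generator_walk[OF wf_G 2(1)] this z]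
      show ?thesis using 2(2) by simp
    qed
  qed
  have "lift_end X fd z (concat hs) = z" if "set hs \<subseteq> set gs" for hs
    using that by (induction hs) (auto simp: lift_end_append closed)
  then show ?thesis using lift_end_homotopic[OF c hom z] by simp
qed

lemma char_subgroup_iff_lift_closed:
  assumes c: "covering X G fv fd" and xh: "xh \<in> verts X" and U: "walk G (fv xh) (fv xh) U"
  shows "U \<in> char_subgroup X G fv fd xh \<longleftrightarrow> lift_end X fd xh U = xh"
proof
  assume "U \<in> char_subgroup X G fv fd xh"
  then obtain W where W: "walk X xh xh W" "homotopic G (fv xh) (fv xh) U (map fd W)"
    unfolding char_subgroup_def by blast
  have "lift_end X fd xh U = lift_end X fd xh (map fd W)"
    using lift_end_homotopic[OF c W(2) xh refl] .
  also have "\<dots> = xh" using lift_end_map[OF c W(1)] .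
  finally show "lift_end X fd xh U = xh" .
next
  assume "lift_end X fd xh U = xh"
  then obtain W where W: "walk X xh xh W" "map fd W = U" using lift_end_walk[OF c xh U] by force
  then show "U \<in> char_subgroup X G fv fd xh"
    unfolding char_subgroup_def homotopic_def using U by auto
qed

context
  fixes X :: "('a, 'b) graph" and G :: "('v, 'd) graph" and fv :: "'a \<Rightarrow> 'v" and fd :: "'b \<Rightarrow> 'd"
    and r :: nat and xh :: 'a
  assumes c: "covering X G fv fd" and xh: "xh \<in> verts X"
    and char: "char_subgroup X G fv fd xh = pi1r G r (fv xh)"
begin

lemma pi1r_cover_lifts_short_cycles_closed: "lifts_short_cycles_closed X G fv fd r"
  unfolding lifts_short_cycles_closed_def
proof (intro allI impI)
  fix y Q z assume Q: "cycle_walk G y Q" "length Q \<le> r" and z: "z \<in> verts X" "fv z = y"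
  note wf_G = covering_wf_target[OF c]
  have Q_walk: "walk G y y Q" using Q by (simp add: cycle_walk_def)
  obtain P where "walk X xh z P"
    using connected_graph_walk[OF covering_connected[OF c] xh z(1)] by blast
  then have P: "walk G (fv xh) y (map fd P)" and lift_P: "lift_end X fd xh (map fd P) = z"
    using covering_map_walk[OF c] lift_end_map[OF c] z(2) by auto
  define g where "g = map fd P @ Q @ rev_walk G (map fd P)"
  have "pi1r_generator G r (fv xh) g" unfolding pi1r_generator_def g_def using P Q by blast
  then have "g \<in> char_subgroup X G fv fd xh" using pi1r_generator_in_pi1r[OF wf_G] char by simp
  then have "lift_end X fd xh g = xh"
    using char_subgroup_iff_lift_closed[OF c xh walk_conjugateI[OF wf_G P Q_walk]]
    by (simp add: g_def)
  then have eq: "lift_end X fd (lift_end X fd z Q) (rev_walk G (map fd P))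
      = lift_end X fd z (rev_walk G (map fd P))"
    using lift_end_rev_walk[OF c xh P] lift_P by (simp add: g_def lift_end_append)
  have "lift_end X fd z Q \<in> verts X" "fv (lift_end X fd z Q) = y"
    using lift_end_walk[OF c z(1)] Q_walk z(2) by auto
  from lift_end_inj[OF c this z walk_rev_walk[OF wf_G P] eq]
  show "lift_end X fd z Q = z" .
qed

text \<open>A loop lifting to a closed walk at z conjugates, along a path from the base point to z, into
  an element of the characteristic subgroup; that is pi_1^r, whose elements lift closed everywhere.\<close>
lemma pi1r_cover_normal: "normal_covering X G fv fd xh"
  unfolding normal_covering_def
proof (intro conjI ballI impI allI c xh)
  fix z U assume z: "z \<in> verts X" "fv z = fv xh" and U: "walk G (fv xh) (fv xh) U"
  note wf_G = covering_wf_target[OF c] and short = pi1r_cover_lifts_short_cycles_closed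
  show "lift_end X fd z U = z \<longleftrightarrow> lift_end X fd xh U = xh"
  proof
    assume closed_z: "lift_end X fd z U = z"
    obtain P where P_X: "walk X xh z P"
      using connected_graph_walk[OF covering_connected[OF c] xh z(1)] by blast
    have P: "walk G (fv xh) (fv xh) (map fd P)" using covering_map_walk[OF c P_X] z(2) by simp
    have lift_P: "lift_end X fd xh (map fd P) = z" using lift_end_map[OF c P_X] .
    define V where "V = map fd P @ U @ rev_walk G (map fd P)"
    have "lift_end X fd xh V = xh"
      using lift_end_rev_walk[OF c xh P] lift_P closed_z by (simp add: V_def lift_end_append)
    then have V: "V \<in> pi1r G r (fv xh)"
      using char_subgroup_iff_lift_closed[OF c xh walk_conjugateI[OF wf_G P U]] char
      by (simp add: V_def)
    define w where "w = lift_end X fd xh (rev_walk G (map fd P))"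
    have w: "w \<in> verts X" "fv w = fv xh"
      using lift_end_walk[OF c xh] walk_rev_walk[OF wf_G P] w_def by auto
    have "lift_end X fd w (map fd P) = xh"
      using lift_end_rev_walk[OF c xh walk_rev_walk[OF wf_G P]]
        rev_walk_rev_walk[OF wf_G walk_darts[OF P]] w_def by simp
    with pi1r_lift_closed[OF c short V w]
    have eq: "lift_end X fd (lift_end X fd xh U) (rev_walk G (map fd P))
        = lift_end X fd xh (rev_walk G (map fd P))"
      by (simp add: V_def w_def lift_end_append)
    have "lift_end X fd xh U \<in> verts X" "fv (lift_end X fd xh U) = fv xh"
      using lift_end_walk[OF c xh U] by auto
    from lift_end_inj[OF c this xh refl walk_rev_walk[OF wf_G P] eq]
    show "lift_end X fd xh U = xh" .
  next
    assume "lift_end X fd xh U = xh"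
    then have "U \<in> pi1r G r (fv xh)" using char_subgroup_iff_lift_closed[OF c xh U] char by simp
    from pi1r_lift_closed[OF c short this z] show "lift_end X fd z U = z" .
  qed
qed

end

section \<open>Coverings preserving balls\<close>

lemma dist_le_length: "walk X u w W \<Longrightarrow> dist X u w \<le> length W"
  unfolding dist_def by (rule Least_le) blast

lemma dist_walk:
  assumes "connected_graph X" "u \<in> verts X" "w \<in> verts X"
  shows "\<exists>W. walk X u w W \<and> length W = dist X u w"
proof -
  obtain W where "walk X u w W" using connected_graph_walk[OF assms] by blast
  then have "\<exists>n W. walk X u w W \<and> length W = n" by blast
  then show ?thesis unfolding dist_def by (rule LeastI_ex)
qed

lemma dist_sym:
  assumes c: "connected_graph X" and u: "u \<in> verts X" and w: "w \<in> verts X"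
  shows "dist X w u = dist X u w"
proof -
  have wf: "wf_graph X" using c by (simp add: connected_graph_def)
  have le: "dist X b a \<le> dist X a b" if ab: "a \<in> verts X" "b \<in> verts X" for a b
  proof -
    obtain W where "walk X a b W" "length W = dist X a b" using dist_walk[OF c ab] by blast
    then show ?thesis using dist_le_length[OF walk_rev_walk[OF wf]] by fastforce
  qed
  show ?thesis using le[OF u w] le[OF w u] by simp
qed

lemma dist_head_le:
  assumes c: "connected_graph X" and v: "v \<in> verts X" and d: "d \<in> darts X"
  shows "dist X v (head X d) \<le> dist X v (tl X d) + 1"
proof -
  have wf: "wf_graph X" using c by (simp add: connected_graph_def)
  obtain W where "walk X v (tl X d) W" "length W = dist X v (tl X d)"
    using dist_walk[OF c v wf_graph_tl[OF wf d]] by blast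
  then show ?thesis using dist_le_length[OF walk_snocI[OF wf _ d]] by fastforce
qed

lemma ball_darts_ends:
  assumes c: "connected_graph X" and v: "v \<in> verts X" and d: "d \<in> ball_darts X v r"
  shows "tl X d \<in> ball_verts X v r \<and> head X d \<in> ball_verts X v r"
proof -
  have wf: "wf_graph X" using c by (simp add: connected_graph_def)
  have dd: "d \<in> darts X" and s: "dist X v (tl X d) + 1 + dist X (head X d) v \<le> r"
    using d by (auto simp: ball_darts_def)
  have rv_d: "rv X d \<in> darts X" "rv X (rv X d) = d" using wf_graph_rv[OF wf dd] by auto
  have "dist X v (head X d) \<le> dist X v (tl X d) + 1" using dist_head_le[OF c v dd] .
  moreover have "dist X v (tl X d) \<le> dist X v (head X d) + 1"
    using dist_head_le[OF c v rv_d(1)] rv_d by (simp add: head_def)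
  moreover have "dist X (head X d) v = dist X v (head X d)"
    using dist_sym[OF c v wf_graph_head[OF wf dd]] .
  ultimately show ?thesis
    using s wf_graph_head[OF wf dd] wf_graph_tl[OF wf dd] by (simp add: ball_verts_def)
qed

lemma closed_walk_in_ball_darts:
  assumes wf: "wf_graph G" and Q: "walk G y y Q" and len: "length Q \<le> r"
  shows "set Q \<subseteq> ball_darts G y r"
proof
  fix d assume "d \<in> set Q"
  then obtain xs ys where Qs: "Q = xs @ d # ys" by (meson split_list)
  then obtain m where m: "walk G y m xs" "walk G m y (d # ys)"
    using Q walk_append[OF wf] by blast
  then have d: "d \<in> darts G" "tl G d = m" "walk G (head G d) y ys" by (auto simp: walk_Cons wf)
  have "dist G y (tl G d) \<le> length xs" using dist_le_length[OF m(1)] d(2) by simp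
  moreover have "dist G (head G d) y \<le> length ys" using dist_le_length[OF d(3)] .
  ultimately show "d \<in> ball_darts G y r" using d(1) Qs len by (auto simp: ball_darts_def)
qed

text \<open>Inside a ball the covering is an isomorphism, so the lift of a walk along darts of the ball
  never leaves the ball upstairs.\<close>
lemma lift_end_in_ball:
  assumes c: "covering C G pv pd" and pb: "preserves_balls C G pv pd r" and yh: "yh \<in> verts C"
  shows "walk G u v W \<Longrightarrow> set W \<subseteq> ball_darts G (pv yh) r \<Longrightarrow> a \<in> ball_verts C yh r
    \<Longrightarrow> pv a = u \<Longrightarrow> lift_end C pd a W \<in> ball_verts C yh r"
proof (induction W arbitrary: u a)
  case Nil
  then show ?case by simp
next
  case (Cons d W)
  have bij: "bij_betw pv (ball_verts C yh r) (ball_verts G (pv yh) r)"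
    "bij_betw pd (ball_darts C yh r) (ball_darts G (pv yh) r)"
    using pb yh covering_vert[OF c yh] by (auto simp: preserves_balls_def)
  from Cons.prems have d: "d \<in> darts G" "tl G d = u" "walk G (head G d) v W"
    by (auto simp: walk_Cons covering_wf_target[OF c])
  have "d \<in> pd ` ball_darts C yh r" using Cons.prems(2) bij(2) by (simp add: bij_betw_def)
  then obtain e where e: "e \<in> ball_darts C yh r" "pd e = d" by auto
  have ed: "e \<in> darts C" using e by (simp add: ball_darts_def)
  have te: "tl C e \<in> ball_verts C yh r" "head C e \<in> ball_verts C yh r"
    using ball_darts_ends[OF covering_connected[OF c] yh e(1)] by auto
  have "pv (tl C e) = pv a" using covering_dart[OF c ed] e d Cons.prems(4) by simp
  then have "tl C e = a" using bij_betw_imp_inj_on[OF bij(1)] te(1) Cons.prems(3) by (simp add: inj_on_eq_iff)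
  then have "lift_end C pd a (d # W) = lift_end C pd (head C e) W"
    using lift_dart_unique[OF c ed _ e(2)] by simp
  moreover have "pv (head C e) = head G d" using covering_head[OF c ed] e by simp
  ultimately show ?case using Cons.IH[OF d(3) _ te(2)] Cons.prems(2) by simp
qed

lemma preserves_balls_lifts_short_cycles_closed:
  assumes c: "covering C G pv pd" and pb: "preserves_balls C G pv pd r"
  shows "lifts_short_cycles_closed C G pv pd r"
  unfolding lifts_short_cycles_closed_def
proof (intro allI impI)
  fix y Q z assume Q: "cycle_walk G y Q" "length Q \<le> r" and z: "z \<in> verts C" "pv z = y"
  have Q_walk: "walk G y y Q" using Q by (simp add: cycle_walk_def)
  have z_ball: "z \<in> ball_verts C z r" using z dist_le_length[of C z z "[]"] by (simp add: ball_verts_def)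
  have "lift_end C pd z Q \<in> ball_verts C z r"
    using lift_end_in_ball[OF c pb z(1) Q_walk _ z_ball z(2)]
      closed_walk_in_ball_darts[OF covering_wf_target[OF c] Q_walk Q(2)] z(2) by simp
  moreover have "pv (lift_end C pd z Q) = pv z" using lift_end_walk[OF c z(1)] Q_walk z(2) by auto
  moreover have "inj_on pv (ball_verts C z r)"
    using pb z covering_vert[OF c z(1)] bij_betw_imp_inj_on unfolding preserves_balls_def by blast
  ultimately show "lift_end C pd z Q = z" using z_ball by (simp add: inj_on_eq_iff)
qed

theorem lemma4p4:
  fixes G :: "('v, 'd) graph" and Gr :: "('a, 'b) graph" and C :: "('c, 'e) graph"
    and r :: nat and x0 :: 'v and xr :: 'a
    and prv :: "'a \<Rightarrow> 'v" and prd :: "'b \<Rightarrow> 'd"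
    and pv :: "'c \<Rightarrow> 'v" and pd :: "'e \<Rightarrow> 'd"
  assumes "connected_graph G"
    and "x0 \<in> verts G"
    and "covering Gr G prv prd" and "xr \<in> verts Gr" and "prv xr = x0"
    and "char_subgroup Gr G prv prd xr = pi1r G r x0"
    and "covering C G pv pd" and "preserves_balls C G pv pd r"
  shows "(\<exists>qv qd. covering Gr C qv qd \<and> (\<forall>v\<in>verts Gr. pv (qv v) = prv v)
                  \<and> (\<forall>d\<in>darts Gr. pd (qd d) = prd d))
       \<and> (\<forall>qv qd qv' qd'.
            covering Gr C qv qd \<and> (\<forall>v\<in>verts Gr. pv (qv v) = prv v) \<and> (\<forall>d\<in>darts Gr. pd (qd d) = prd d)
          \<and> covering Gr C qv' qd' \<and> (\<forall>v\<in>verts Gr. pv (qv' v) = prv v) \<and> (\<forall>d\<in>darts Gr. pd (qd' d) = prd d)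
          \<longrightarrow> equivalent_coverings Gr qv qd Gr qv' qd')"
proof -
  note Gr = assms(3,4) and C = assms(7)
  have char: "char_subgroup Gr G prv prd xr = pi1r G r (prv xr)" using assms(5,6) by simp
  have normal: "normal_covering Gr G prv prd xr" using pi1r_cover_normal[OF Gr char] .
  have "prv xr \<in> pv ` verts C" using C covering_vert[OF Gr] by (simp add: covering_def)
  then obtain c where c: "c \<in> verts C" "pv c = prv xr" by auto
  have "\<exists>qv qd. covering Gr C qv qd \<and> qv xr = c \<and> (\<forall>v\<in>verts Gr. pv (qv v) = prv v)
      \<and> (\<forall>d\<in>darts Gr. pd (qd d) = prd d)"
  proof (rule covering_lift[OF C assms(3) c(1) assms(4) c(2)])
    fix U assume U: "walk G (prv xr) (prv xr) U" "lift_end Gr prd xr U = xr"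
    then have "U \<in> pi1r G r (pv c)" using char_subgroup_iff_lift_closed[OF Gr U(1)] char c(2) by simp
    from pi1r_lift_closed[OF C preserves_balls_lifts_short_cycles_closed[OF C assms(8)] this c(1) refl]
    show "lift_end C pd c U = c" .
  qed
  then show ?thesis by (auto intro: normal_covering_lifts_equivalent[OF normal C])
qed

end
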